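(* Let $p_1=2,p_2=3,\dots$ denote the primes. For real $\sigma>1$ and real $t$, $$|\zeta(\sigma+it)|^2=\frac{\zeta(4\sigma)}{\zeta(2\sigma)}\prod_{n=1}^{\infty}\left(1-\frac{\cos(t\log p_n)}{\cosh(\sigma\log p_n)}\right)^{-1}.$$ In particular, for every integer $k\ge2$ and real $t$, $$|\zeta(k+it)|=(2\pi)^k\sqrt{\frac{|B_{4k}|\,(2k)!}{|B_{2k}|\,(4k)!}}\;\prod_{n=1}^{\infty}\left(1-\frac{\cos(t\log p_n)}{\cosh(k\log p_n)}\right)^{-1/2}.$$
   Context: $\zeta$ is the Riemann zeta function and $B_j$ denotes the $j$-th Bernoulli number ($B_0=1$, $B_1=-1/2$, $B_2=1/6,\dots$). *)

theory Defs
  imports "HOL-Analysis.Analysis" "HOL-Computational_Algebra.Primes"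
begin

(* Riemann zeta function on the half-plane Re s > 1, given by its Dirichlet series.
   The statement only evaluates zeta at points with real part > 1. *)
definition zeta :: "complex \<Rightarrow> complex" where
  "zeta s = (\<Sum>n. 1 / (of_nat (Suc n)) powr s)"

(* Bernoulli numbers, B_0 = 1, B_1 = -1/2, B_2 = 1/6, ...:
   sum_{k=0}^{n} binom(n+1,k) B_k = 0 for n >= 1 *)
fun bernoulli :: "nat \<Rightarrow> real" where
  "bernoulli n = (if n = 0 then 1
     else - (\<Sum>k<n. real (Suc n choose k) * bernoulli k) / real (Suc n))"

(* nth_prime 0 = 2, nth_prime 1 = 3, ... ; so p_n (paper, 1-indexed) = nth_prime (n-1) *)
definition nth_prime :: "nat \<Rightarrow> nat" where
  "nth_prime n = enumerate {p::nat. prime p} n"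

end

theory Submission
  imports Defs
begin

text \<open>
  Write \<open>s = \<sigma> + it\<close> and \<open>u = p\<^sup>-\<^sup>\<sigma>\<close>. Since \<open>|1 - p\<^sup>-\<^sup>s|\<^sup>2 = 1 - 2u cos (t log p) + u\<^sup>2\<close> and
  \<open>1 - cos (t log p) / cosh (\<sigma> log p) = (1 - 2u cos (t log p) + u\<^sup>2) / (1 + u\<^sup>2)\<close>, the factor belonging
  to \<open>p\<close> equals \<open>(1 - p\<^sup>-\<^sup>4\<^sup>\<sigma>) / ((1 - p\<^sup>-\<^sup>2\<^sup>\<sigma>) |1 - p\<^sup>-\<^sup>s|\<^sup>2)\<close>, and the Euler products of \<open>\<zeta>\<close> at
  \<open>4\<sigma>\<close>, \<open>2\<sigma>\<close> and \<open>s\<close> (together with its conjugate) give the first identity. For \<open>\<sigma> = k\<close> the second follows by taking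
  square roots and inserting Euler's evaluation \<open>\<zeta>(2k) = |B\<^sub>2\<^sub>k| (2\<pi>)\<^sup>2\<^sup>k / (2 (2k)!)\<close>. That evaluation
  comes from comparing two power series for \<open>x cot x\<close>: one built from the generating function
  \<open>x / (e\<^sup>x - 1)\<close> of the Bernoulli numbers, the other from the partial fraction expansion of
  \<open>\<pi> cot \<pi>z\<close>, which in turn follows from the reflection formula for \<open>\<Gamma>\<close>.
\<close>

lemma prime_nth_prime [simp]: "prime (nth_prime n)"
  unfolding nth_prime_def using enumerate_in_set[OF primes_infinite] by simp

lemma strict_mono_nth_prime: "strict_mono nth_prime"
  unfolding nth_prime_def strict_mono_def using enumerate_mono[OF _ primes_infinite] by auto

lemma inj_nth_prime: "inj nth_prime"
  using strict_mono_nth_prime by (rule strict_mono_imp_inj_on)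

lemma ex_nth_prime_eq: "prime p \<Longrightarrow> \<exists>n. nth_prime n = p"
  unfolding nth_prime_def using enumerate_Ex[OF primes_infinite, of p] by auto

lemma nth_prime_ge: "n \<le> nth_prime n"
  using strict_mono_imp_increasing[OF strict_mono_nth_prime] .

section \<open>The Euler product\<close>

definition rough_numbers :: "nat \<Rightarrow> nat set" where
  "rough_numbers j = {n. n \<ge> 1 \<and> (\<forall>i<j. \<not> nth_prime i dvd n)}"

lemma rough_numbers_0: "rough_numbers 0 = {1..}"
  by (auto simp: rough_numbers_def)

lemma one_in_rough_numbers: "1 \<in> rough_numbers j"
  by (auto simp: rough_numbers_def) (metis One_nat_def not_prime_1 prime_nth_prime)

lemma nth_prime_mult_in_rough_numbers:
  assumes "m \<in> rough_numbers j"
  shows "nth_prime j * m \<in> rough_numbers j"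
proof -
  have "\<not> nth_prime i dvd nth_prime j" if "i < j" for i
    using that primes_dvd_imp_eq[OF prime_nth_prime prime_nth_prime, of i j] inj_nth_prime
    by (auto dest: injD)
  with assms show ?thesis
    using prime_gt_0_nat[OF prime_nth_prime[of j]]
    by (auto simp: rough_numbers_def prime_dvd_mult_iff)
qed

lemma rough_numbers_Suc:
  "rough_numbers (Suc j) = rough_numbers j - (\<lambda>m. nth_prime j * m) ` rough_numbers j"
proof safe
  fix n assume n: "n \<in> rough_numbers j" "n \<notin> (\<lambda>m. nth_prime j * m) ` rough_numbers j"
  show "n \<in> rough_numbers (Suc j)"
  proof (rule ccontr)
    assume "n \<notin> rough_numbers (Suc j)"
    with n(1) obtain m where m: "n = nth_prime j * m"
      by (auto simp: rough_numbers_def less_Suc_eq elim: dvdE)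
    with n(1) have "m \<in> rough_numbers j" by (auto simp: rough_numbers_def intro: dvd_mult)
    with n(2) m show False by auto
  qed
qed (auto simp: rough_numbers_def)

text \<open>Every rough number other than 1 has a prime factor \<open>nth_prime i \<ge> nth_prime j \<ge> j\<close>.\<close>

lemma rough_numbers_subset: "rough_numbers j - {1} \<subseteq> {j..}"
proof
  fix n assume n: "n \<in> rough_numbers j - {1}"
  hence "n \<ge> 2" by (auto simp: rough_numbers_def)
  then obtain p where p: "prime p" "p dvd n" using prime_factor_nat[of n] by auto
  obtain i where i: "nth_prime i = p" using ex_nth_prime_eq[OF p(1)] by auto
  have "j \<le> i" using n p(2) i by (auto simp: rough_numbers_def not_less[symmetric])
  hence "j \<le> nth_prime i"
    using nth_prime_ge[of j] strict_mono_less_eq[OF strict_mono_nth_prime, of j i] by linarith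
  moreover have "p \<le> n" using p(2) \<open>n \<ge> 2\<close> by (intro dvd_imp_le) auto
  ultimately show "n \<in> {j..}" using i by auto
qed

locale completely_multiplicative_summable =
  fixes f :: "nat \<Rightarrow> 'a :: {real_normed_field, banach}"
  assumes f_0: "f 0 = 0" and f_1: "f 1 = 1"
    and f_mult: "f (m * n) = f m * f n"
    and summable_norm_f: "summable (\<lambda>n. norm (f n))"
begin

lemma has_sum_suminf: "(f has_sum (\<Sum>n. f n)) UNIV"
  by (intro norm_summable_imp_has_sum summable_norm_f summable_sums summable_norm_cancel[OF summable_norm_f])

lemma has_sum_rough_numbers:
  "(f has_sum ((\<Sum>n. f n) * (\<Prod>i<j. (1 - f (nth_prime i))))) (rough_numbers j)"
proof (induction j)
  case 0
  from has_sum_suminf have "(f has_sum (\<Sum>n. f n)) {1..}"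
    by (rule has_sum_cong_neutral[THEN iffD1, rotated -1]) (auto simp: not_le f_0)
  thus ?case by (simp add: rough_numbers_0)
next
  case (Suc j)
  define P where "P = (\<Sum>n. f n) * (\<Prod>i<j. (1 - f (nth_prime i)))"
  define p where "p = nth_prime j"
  have "p > 0" unfolding p_def by (rule prime_gt_0_nat[OF prime_nth_prime])
  have IH: "(f has_sum P) (rough_numbers j)" using Suc.IH by (simp add: P_def)
  hence "((\<lambda>m. f (p * m)) has_sum (f p * P)) (rough_numbers j)"
    unfolding f_mult by (rule has_sum_cmult_right)
  hence "(f has_sum (f p * P)) ((\<lambda>m. p * m) ` rough_numbers j)"
    using \<open>p > 0\<close> by (subst has_sum_reindex) (auto simp: inj_on_def o_def)
  hence "(f has_sum (P - f p * P)) (rough_numbers j - (\<lambda>m. p * m) ` rough_numbers j)"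
    by (intro has_sum_Diff[OF IH]) (auto simp: p_def nth_prime_mult_in_rough_numbers)
  thus ?case by (simp add: rough_numbers_Suc P_def p_def algebra_simps)
qed

lemma euler_product_tendsto_one:
  "(\<lambda>j. (\<Sum>n. f n) * (\<Prod>i<j. (1 - f (nth_prime i)))) \<longlonglongrightarrow> 1"
proof -
  define S where "S j = (\<Sum>n. f n) * (\<Prod>i<j. (1 - f (nth_prime i)))" for j
  define N where "N = (\<lambda>n. norm (f n))"
  have "summable N"
    unfolding N_def by (rule summable_norm_f)
  hence N_has_sum: "(N has_sum (\<Sum>n. N n)) UNIV"
    by (intro norm_summable_imp_has_sum summable_sums) (simp_all add: N_def)
  have N_summable: "N summable_on A" for A
    by (meson N_has_sum summable_on_def summable_on_subset_banach top_greatest)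
  have bound: "norm (S j - 1) \<le> (\<Sum>n. N n) - (\<Sum>n<j. N n)" for j
  proof -
    have "(f has_sum 1) {1}"
      using has_sum_finite[of "{1::nat}" f] f_1 by simp
    hence "(f has_sum (S j - 1)) (rough_numbers j - {1})"
      unfolding S_def by (rule has_sum_Diff[OF has_sum_rough_numbers]) (use one_in_rough_numbers in blast)
    hence "norm (S j - 1) \<le> infsum N (rough_numbers j - {1})"
      using N_summable unfolding N_def by (metis infsumI norm_infsum_bound)
    also have "\<dots> \<le> infsum N {j..}"
      using rough_numbers_subset[of j] by (intro infsum_mono_neutral N_summable) (auto simp: N_def)
    also have "infsum N {j..} = (\<Sum>n. N n) - (\<Sum>n<j. N n)"
      using has_sum_Diff[OF N_has_sum has_sum_finite[of "{..<j}" N]]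
      by (simp add: infsumI Compl_lessThan[symmetric] Compl_eq_Diff_UNIV)
    finally show ?thesis .
  qed
  have "(\<lambda>j. (\<Sum>n. N n) - (\<Sum>n<j. N n)) \<longlonglongrightarrow> 0"
    using tendsto_diff[OF tendsto_const[of "suminf N"] summable_LIMSEQ[OF \<open>summable N\<close>]] by simp
  hence "(\<lambda>j. S j - 1) \<longlonglongrightarrow> 0"
    by (rule Lim_null_comparison[rotated]) (use bound in \<open>auto intro: always_eventually\<close>)
  thus ?thesis by (simp add: S_def Lim_null[of _ 1])
qed

lemma suminf_nonzero: "(\<Sum>n. f n) \<noteq> 0"
  using euler_product_tendsto_one LIMSEQ_unique[of "\<lambda>_. 0::'a" 0 1] by fastforce

theorem euler_product_tendsto:
  "(\<lambda>j. \<Prod>i<j. (1 - f (nth_prime i))) \<longlonglongrightarrow> inverse (\<Sum>n. f n)"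
  using tendsto_mult[OF tendsto_const[of "inverse (\<Sum>n. f n)"] euler_product_tendsto_one]
  by (simp add: suminf_nonzero mult.assoc[symmetric])

end

definition zeta_term :: "complex \<Rightarrow> nat \<Rightarrow> complex" where
  "zeta_term s n = 1 / of_nat n powr s"

lemma zeta_term_0 [simp]: "zeta_term s 0 = 0"
  by (simp add: zeta_term_def)

lemma zeta_term_mult: "zeta_term s (m * n) = zeta_term s m * zeta_term s n"
  by (cases "m = 0 \<or> n = 0") (auto simp: zeta_term_def powr_times_real)

lemma zeta_term_eq_exp: "n > 0 \<Longrightarrow> zeta_term s n = exp (- (s * of_real (ln (real n))))"
  by (simp add: zeta_term_def powr_def exp_minus inverse_eq_divide)

lemma zeta_term_of_real: "zeta_term (of_real a) n = of_real (real n powr (- a))"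
  by (cases "n = 0") (simp_all add: zeta_term_def powr_minus_divide flip: powr_of_real)

lemma norm_zeta_term: "norm (zeta_term s n) = real n powr (- Re s)"
  by (cases "n = 0") (simp_all add: zeta_term_def norm_divide norm_powr_real_powr powr_minus_divide)

lemma summable_norm_zeta_term: "Re s > 1 \<Longrightarrow> summable (\<lambda>n. norm (zeta_term s n))"
  unfolding norm_zeta_term by (subst summable_real_powr_iff) auto

lemma suminf_zeta_term: "Re s > 1 \<Longrightarrow> (\<Sum>n. zeta_term s n) = zeta s"
  using suminf_split_head[OF summable_norm_cancel[OF summable_norm_zeta_term]]
  by (simp add: zeta_def zeta_term_def)

lemma completely_multiplicative_summable_zeta_term:
  "Re s > 1 \<Longrightarrow> completely_multiplicative_summable (zeta_term s)"
  by unfold_locales (simp_all add: zeta_term_mult summable_norm_zeta_term, simp add: zeta_term_def)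

lemma zeta_nonzero: "Re s > 1 \<Longrightarrow> zeta s \<noteq> 0"
  using completely_multiplicative_summable.suminf_nonzero[OF completely_multiplicative_summable_zeta_term]
  by (simp add: suminf_zeta_term)

theorem euler_product_zeta:
  "Re s > 1 \<Longrightarrow> (\<lambda>j. \<Prod>i<j. (1 - zeta_term s (nth_prime i))) \<longlonglongrightarrow> inverse (zeta s)"
  using completely_multiplicative_summable.euler_product_tendsto[OF completely_multiplicative_summable_zeta_term]
  by (simp add: suminf_zeta_term)

section \<open>The factors of the product\<close>

lemma one_minus_cos_div_cosh_pos:
  fixes y z :: real
  assumes "y \<noteq> 0"
  shows "1 - cos z / cosh y > 0"
proof -
  have "cos z < cosh y"
    using cos_le_one[of z] cosh_real_ge_1[of y] cosh_real_one_iff[of y] assms by linarith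
  thus ?thesis by simp
qed

lemma one_minus_cos_div_cosh_eq:
  fixes y z :: real
  shows "1 - cos z / cosh y = (1 - 2 * exp (- y) * cos z + (exp (- y))\<^sup>2) / (1 + (exp (- y))\<^sup>2)"
proof -
  define u where "u = exp (- y)"
  have "u > 0" by (simp add: u_def)
  have "exp y = 1 / u"
    by (simp add: u_def exp_minus divide_inverse)
  hence cosh_eq: "cosh y = (1 / u + u) / 2"
    by (simp add: cosh_def u_def)
  have "1 + u * u > 0"
    using \<open>u > 0\<close> by (simp add: add_pos_nonneg)
  thus ?thesis
    using \<open>u > 0\<close> unfolding cosh_eq u_def[symmetric] by (simp add: field_simps power2_eq_square)
qed

lemma norm_one_minus_exp_squared:
  fixes \<sigma> t x :: real
  shows "(cmod (1 - exp (- (Complex \<sigma> t * of_real x))))\<^sup>2 =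
    1 - 2 * exp (- (\<sigma> * x)) * cos (t * x) + (exp (- (\<sigma> * x)))\<^sup>2"
proof -
  define u where "u = exp (- (\<sigma> * x))"
  have "(cmod (1 - exp (- (Complex \<sigma> t * of_real x))))\<^sup>2 = (1 - u * cos (t * x))\<^sup>2 + (u * sin (t * x))\<^sup>2"
    unfolding cmod_power2 by (simp add: Re_exp Im_exp u_def)
  also have "\<dots> = 1 - 2 * u * cos (t * x) + u\<^sup>2 * ((sin (t * x))\<^sup>2 + (cos (t * x))\<^sup>2)"
    unfolding power2_eq_square by algebra
  finally show ?thesis by (simp add: u_def)
qed

lemma inverse_one_minus_cos_div_cosh_eq:
  fixes \<sigma> t :: real and p :: nat
  assumes "p \<ge> 2" "\<sigma> > 0"
  defines "x \<equiv> ln (real p)" and "s \<equiv> Complex \<sigma> t"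
  shows "complex_of_real (inverse (1 - cos (t * x) / cosh (\<sigma> * x))) =
     (1 - zeta_term (of_real (4 * \<sigma>)) p) /
       ((1 - zeta_term (of_real (2 * \<sigma>)) p) * ((1 - zeta_term s p) * cnj (1 - zeta_term s p)))"
proof -
  define u where "u = real p powr (- \<sigma>)"
  define N where "N = 1 - 2 * u * cos (t * x) + u\<^sup>2"
  have u_eq: "exp (- (\<sigma> * x)) = u"
    using assms(1) by (simp add: u_def x_def powr_def)
  have "u > 0" "u < 1"
    using assms by (auto simp: u_def powr_less_one)
  hence "u\<^sup>2 < 1"
    by (simp add: power_less_one_iff)
  have "zeta_term (of_real (real c * \<sigma>)) p = of_real (u ^ c)" for c
    using assms(1) by (subst zeta_term_of_real) (simp add: u_def powr_power)
  from this[of 2] this[of 4]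
  have zeta_term_2_4: "zeta_term (of_real (2 * \<sigma>)) p = of_real (u\<^sup>2)"
    "zeta_term (of_real (4 * \<sigma>)) p = of_real (u ^ 4)"
    by simp_all
  have "(1 - zeta_term s p) * cnj (1 - zeta_term s p) = of_real ((cmod (1 - zeta_term s p))\<^sup>2)"
    by (simp only: complex_norm_square)
  also have "(cmod (1 - zeta_term s p))\<^sup>2 = N"
    using assms(1) norm_one_minus_exp_squared[of \<sigma> t x, unfolded u_eq]
    unfolding N_def s_def by (simp add: zeta_term_eq_exp x_def)
  finally have norm_eq: "(1 - zeta_term s p) * cnj (1 - zeta_term s p) = of_real N" .
  have "1 - u ^ 4 = (1 - u\<^sup>2) * (1 + u\<^sup>2)"
    by (simp add: algebra_simps power2_eq_square power4_eq_xxxx)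
  hence "(1 - u ^ 4) / ((1 - u\<^sup>2) * N) = (1 + u\<^sup>2) / N"
    using \<open>u\<^sup>2 < 1\<close> by simp
  also have "\<dots> = inverse (1 - cos (t * x) / cosh (\<sigma> * x))"
    unfolding one_minus_cos_div_cosh_eq[where y = "\<sigma> * x"] u_eq N_def by (rule inverse_divide[symmetric])
  finally have "complex_of_real (inverse (1 - cos (t * x) / cosh (\<sigma> * x))) =
      complex_of_real ((1 - u ^ 4) / ((1 - u\<^sup>2) * N))"
    by simp
  also have "\<dots> = (1 - of_real (u ^ 4)) / ((1 - of_real (u\<^sup>2)) * of_real N)"
    by simp
  finally show ?thesis
    unfolding zeta_term_2_4 norm_eq .
qed

lemma has_prod_of_tendsto_nonzero:
  fixes f :: "nat \<Rightarrow> 'a :: {semidom, t2_space}"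
  assumes "(\<lambda>n. \<Prod>i<n. f i) \<longlonglongrightarrow> L" "L \<noteq> 0"
  shows "f has_prod L"
  using assms LIMSEQ_lessThan_iff_atMost[of "prod f" L] by (simp add: has_prod_def raw_has_prod_def)

lemma has_prod_powr:
  fixes f :: "nat \<Rightarrow> real"
  assumes "\<And>n. f n > 0" "f has_prod L"
  shows "(\<lambda>n. f n powr a) has_prod (L powr a)"
proof (rule has_prod_of_tendsto_nonzero)
  have "L > 0"
    using has_prod_pos assms by blast
  have "(\<lambda>n. (\<Prod>i<n. f i) powr a) \<longlonglongrightarrow> L powr a"
    using has_prod_imp_tendsto'[OF assms(2)] \<open>L > 0\<close> by (intro tendsto_intros) auto
  thus "(\<lambda>n. \<Prod>i<n. f i powr a) \<longlonglongrightarrow> L powr a"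
    by (simp add: prod_powr_distrib)
  show "L powr a \<noteq> 0"
    using \<open>L > 0\<close> by simp
qed

definition cosh_factor :: "real \<Rightarrow> real \<Rightarrow> nat \<Rightarrow> real" where
  "cosh_factor \<sigma> t n =
     1 - cos (t * ln (real (nth_prime n))) / cosh (\<sigma> * ln (real (nth_prime n)))"

lemma cosh_factor_pos: "\<sigma> > 0 \<Longrightarrow> cosh_factor \<sigma> t n > 0"
  unfolding cosh_factor_def
  using prime_gt_1_nat[OF prime_nth_prime[of n]] by (intro one_minus_cos_div_cosh_pos) simp

lemma complex_tendsto_prod_inverse_cosh_factor:
  fixes \<sigma> t :: real
  assumes "\<sigma> > 1"
  defines "s \<equiv> Complex \<sigma> t"
  shows "(\<lambda>j. complex_of_real (\<Prod>i<j. inverse (cosh_factor \<sigma> t i))) \<longlonglongrightarrow>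
           zeta (of_real (2 * \<sigma>)) * of_real ((cmod (zeta s))\<^sup>2) / zeta (of_real (4 * \<sigma>))"
proof -
  define P where "P a j = (\<Prod>i<j. (1 - zeta_term a (nth_prime i)))" for a j
  have Re_gt_1: "Re s > 1" "Re (of_real (2 * \<sigma>)) > 1" "Re (of_real (4 * \<sigma>)) > 1"
    using assms by (auto simp: s_def)
  have factor: "complex_of_real (inverse (cosh_factor \<sigma> t i)) =
      (1 - zeta_term (of_real (4 * \<sigma>)) (nth_prime i)) / ((1 - zeta_term (of_real (2 * \<sigma>)) (nth_prime i)) *
        ((1 - zeta_term s (nth_prime i)) * cnj (1 - zeta_term s (nth_prime i))))" for i
    unfolding cosh_factor_def s_def using assms
    by (intro inverse_one_minus_cos_div_cosh_eq prime_ge_2_nat prime_nth_prime) auto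
  have "complex_of_real (\<Prod>i<j. inverse (cosh_factor \<sigma> t i)) =
      P (of_real (4 * \<sigma>)) j / (P (of_real (2 * \<sigma>)) j * (P s j * cnj (P s j)))" for j
    unfolding of_real_prod factor P_def by (simp only: prod_dividef prod.distrib cnj_prod)
  moreover have "(\<lambda>j. P (of_real (4 * \<sigma>)) j / (P (of_real (2 * \<sigma>)) j * (P s j * cnj (P s j)))) \<longlonglongrightarrow>
      inverse (zeta (of_real (4 * \<sigma>))) /
        (inverse (zeta (of_real (2 * \<sigma>))) * (inverse (zeta s) * cnj (inverse (zeta s))))"
    unfolding P_def using Re_gt_1 zeta_nonzero
    by (intro tendsto_intros euler_product_zeta) auto
  moreover have "inverse (zeta (of_real (4 * \<sigma>))) /
        (inverse (zeta (of_real (2 * \<sigma>))) * (inverse (zeta s) * cnj (inverse (zeta s)))) =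
      zeta (of_real (2 * \<sigma>)) * of_real ((cmod (zeta s))\<^sup>2) / zeta (of_real (4 * \<sigma>))"
    unfolding complex_norm_square using Re_gt_1 zeta_nonzero by (simp add: field_simps)
  ultimately show ?thesis
    by simp
qed

lemma has_prod_inverse_cosh_factor:
  fixes \<sigma> t :: real
  assumes "\<sigma> > 1"
  obtains L where "(\<lambda>n. inverse (cosh_factor \<sigma> t n)) has_prod L"
    and "complex_of_real L =
           zeta (of_real (2 * \<sigma>)) * of_real ((cmod (zeta (Complex \<sigma> t)))\<^sup>2) / zeta (of_real (4 * \<sigma>))"
proof -
  define C where "C = zeta (of_real (2 * \<sigma>)) * of_real ((cmod (zeta (Complex \<sigma> t)))\<^sup>2) / zeta (of_real (4 * \<sigma>))"
  have lim: "(\<lambda>j. complex_of_real (\<Prod>i<j. inverse (cosh_factor \<sigma> t i))) \<longlonglongrightarrow> C"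
    unfolding C_def using assms by (rule complex_tendsto_prod_inverse_cosh_factor)
  hence "C \<in> \<real>"
    by (rule real_lim_sequentially) auto
  then obtain L where L: "C = of_real L"
    by (auto elim: Reals_cases)
  have "zeta (of_real (2 * \<sigma>)) \<noteq> 0" "zeta (of_real (4 * \<sigma>)) \<noteq> 0" "zeta (Complex \<sigma> t) \<noteq> 0"
    using assms by (simp_all add: zeta_nonzero)
  hence "C \<noteq> 0"
    unfolding C_def by simp
  have "(\<lambda>n. inverse (cosh_factor \<sigma> t n)) has_prod L"
  proof (rule has_prod_of_tendsto_nonzero)
    show "(\<lambda>j. \<Prod>i<j. inverse (cosh_factor \<sigma> t i)) \<longlonglongrightarrow> L"
      using lim unfolding L tendsto_of_real_iff .
  qed (use \<open>C \<noteq> 0\<close> L in simp)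
  thus ?thesis
    using L[symmetric] unfolding C_def by (rule that)
qed

section \<open>Bernoulli numbers and \<open>x cot x\<close>\<close>

declare bernoulli.simps [simp del]

lemma bernoulli_sum_binomial:
  assumes "n \<ge> 1"
  shows "(\<Sum>k\<le>n. real (Suc n choose k) * bernoulli k) = 0"
proof -
  have "real (Suc n) * bernoulli n = - (\<Sum>k<n. real (Suc n choose k) * bernoulli k)"
    using assms by (subst bernoulli.simps) (simp del: of_nat_Suc)
  thus ?thesis
    by (simp add: lessThan_Suc_atMost[symmetric] del: of_nat_Suc)
qed

lemma bernoulli_convolution:
  "(\<Sum>k\<le>n. bernoulli k / (fact k * fact (Suc n - k))) = (if n = 0 then 1 else 0)"
proof (cases "n = 0")
  case False
  have "(\<Sum>k\<le>n. bernoulli k / (fact k * fact (Suc n - k))) =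
        (\<Sum>k\<le>n. real (Suc n choose k) * bernoulli k) / fact (Suc n)"
    unfolding sum_divide_distrib by (intro sum.cong refl) (simp add: binomial_fact)
  with False show ?thesis
    using bernoulli_sum_binomial[of n] by simp
qed (simp add: bernoulli.simps)

text \<open>\<open>bernoulli_fps c\<close> is the expansion of \<open>c x / (e\<^sup>c\<^sup>x - 1)\<close>.\<close>

definition bernoulli_fps :: "'a :: real_normed_field \<Rightarrow> 'a fps" where
  "bernoulli_fps c = Abs_fps (\<lambda>n. of_real (bernoulli n) * c ^ n / fact n)"

definition exp_minus_one_div_X_fps :: "'a :: real_normed_field \<Rightarrow> 'a fps" where
  "exp_minus_one_div_X_fps c = Abs_fps (\<lambda>n. c ^ n / fact (Suc n))"

lemma bernoulli_fps_mult_exp_minus_one_div_X_fps: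
  "bernoulli_fps c * exp_minus_one_div_X_fps c = 1"
proof (rule fps_ext)
  fix n
  have "fps_nth (bernoulli_fps c * exp_minus_one_div_X_fps c) n =
      (\<Sum>k=0..n. of_real (bernoulli k) * c ^ k / fact k * (c ^ (n - k) / fact (Suc (n - k))))"
    by (simp add: fps_mult_nth bernoulli_fps_def exp_minus_one_div_X_fps_def)
  also have "\<dots> = c ^ n * of_real (\<Sum>k\<le>n. bernoulli k / (fact k * fact (Suc n - k)))"
    unfolding of_real_sum sum_distrib_left atMost_atLeast0
    by (intro sum.cong refl) (auto simp: power_add[symmetric] Suc_diff_le field_simps)
  also have "\<dots> = fps_nth 1 n"
    by (subst bernoulli_convolution) auto
  finally show "fps_nth (bernoulli_fps c * exp_minus_one_div_X_fps c) n = fps_nth 1 n" .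
qed

lemma fps_X_mult_exp_minus_one_div_X_fps:
  "fps_const c * fps_X * exp_minus_one_div_X_fps c = fps_exp c - 1"
proof (rule fps_ext)
  fix n
  show "fps_nth (fps_const c * fps_X * exp_minus_one_div_X_fps c) n = fps_nth (fps_exp c - 1) n"
    by (cases n) (simp_all add: exp_minus_one_div_X_fps_def mult.assoc fps_X_mult_nth algebra_simps)
qed

definition sin_div_X_fps :: "complex fps" where
  "sin_div_X_fps = fps_shift 1 (fps_sin 1)"

lemma fps_X_mult_sin_div_X_fps: "fps_X * sin_div_X_fps = fps_sin 1"
proof (rule fps_ext)
  fix n
  show "fps_nth (fps_X * sin_div_X_fps) n = fps_nth (fps_sin 1) n"
    by (cases n) (simp_all add: sin_div_X_fps_def fps_X_mult_nth fps_sin_def)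
qed

lemma sin_div_X_fps_nonzero: "sin_div_X_fps \<noteq> 0"
proof
  assume "sin_div_X_fps = 0"
  hence "fps_nth sin_div_X_fps 0 = 0" by simp
  thus False by (simp add: sin_div_X_fps_def fps_sin_def)
qed

text \<open>With \<open>e = e\<^sup>i\<^sup>x\<close>, \<open>c = cos x\<close>, \<open>s = sin x = x S\<close>: from \<open>B = 2ix / (e\<^sup>2 - 1)\<close> one gets
  \<open>B + ix = x c / s\<close>, i.e. \<open>x cot x = ix + 2ix / (e\<^sup>2\<^sup>i\<^sup>x - 1)\<close>.\<close>

lemma cot_identity_idom:
  fixes B X S c s e i :: "'a :: idom"
  assumes e: "e = c + i * s" and ii: "i * i = -1" and cs: "c * c + s * s = 1" and s: "s = X * S"
    and Be: "B * (e * e - 1) = 2 * i * X" and nz: "e \<noteq> 0" "X \<noteq> 0" "2 * i \<noteq> 0"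
  shows "(B + i * X) * S = c"
proof -
  have "e * e - 1 = 2 * i * s * e"
    using e ii cs by algebra
  hence "(2 * i * X) * (B * S * e) = (2 * i * X) * 1"
    using Be s by algebra
  hence "B * S * e = 1"
    using nz by simp
  hence "((B + i * X) * S) * e = c * e"
    using e ii cs s by algebra
  thus ?thesis
    using nz by simp
qed

lemma bernoulli_fps_cot: "(bernoulli_fps (2 * \<i>) + fps_const \<i> * fps_X) * sin_div_X_fps = fps_cos 1"
proof (rule cot_identity_idom)
  show "fps_exp \<i> = fps_cos 1 + fps_const \<i> * fps_sin (1::complex)"
    using fps_exp_ii_sin_cos[of "1::complex"] by simp
  have "fps_const \<i> * fps_const \<i> = fps_const (\<i> * \<i> :: complex)"
    by (rule fps_const_mult)
  thus "fps_const \<i> * fps_const \<i> = (-1 :: complex fps)"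
    by simp
  show "fps_cos 1 * fps_cos 1 + fps_sin 1 * fps_sin 1 = (1::complex fps)"
    using fps_sin_cos_sum_of_squares[of "1::complex"] unfolding power2_eq_square .
  show "fps_sin 1 = fps_X * sin_div_X_fps"
    by (simp add: fps_X_mult_sin_div_X_fps)
  have c2: "fps_const (2 * \<i>) = 2 * fps_const \<i>"
    by (simp only: fps_const_mult numeral_fps_const)
  have e2: "fps_exp (2 * \<i>) = fps_exp \<i> * fps_exp (\<i>::complex)"
    unfolding mult_2 by (rule fps_exp_add_mult)
  have "bernoulli_fps (2 * \<i>) * (fps_exp (2 * \<i>) - 1) =
      (bernoulli_fps (2 * \<i>) * exp_minus_one_div_X_fps (2 * \<i>)) * (fps_const (2 * \<i>) * fps_X)"
    by (simp only: fps_X_mult_exp_minus_one_div_X_fps[symmetric] ac_simps)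
  thus "bernoulli_fps (2 * \<i>) * (fps_exp \<i> * fps_exp \<i> - 1) = 2 * fps_const \<i> * fps_X"
    by (simp only: bernoulli_fps_mult_exp_minus_one_div_X_fps e2 c2 mult_1_left mult.assoc)
  show "fps_exp \<i> \<noteq> (0::complex fps)"
  proof
    assume "fps_exp \<i> = (0::complex fps)"
    hence "fps_nth (fps_exp \<i>) 0 = (0::complex)" by simp
    thus False by simp
  qed
  show "fps_X \<noteq> (0::complex fps)" "2 * fps_const \<i> \<noteq> (0::complex fps)"
    unfolding c2[symmetric] by simp_all
qed

section \<open>The partial fraction expansion of the cotangent\<close>

text \<open>Differentiate the reflection formula \<open>\<Gamma>(z) \<Gamma>(1 - z) = \<pi> / sin (\<pi> z)\<close>.\<close>

lemma pi_cot_eq_Digamma: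
  fixes z :: complex
  assumes z: "z \<notin> \<int>"
  shows "of_real pi * cot (of_real pi * z) = Digamma (1 - z) - Digamma z"
proof -
  have z1: "z \<notin> \<int>\<^sub>\<le>\<^sub>0" and z2: "1 - z \<notin> \<int>\<^sub>\<le>\<^sub>0"
    using z nonpos_Ints_subset_Ints Ints_diff[OF Ints_1, of "1 - z"] by auto
  have sin_nz: "sin (of_real pi * z) \<noteq> 0"
  proof
    assume "sin (of_real pi * z) = 0"
    then obtain n :: int where "of_real pi * z = of_int n * of_real pi"
      by (auto simp: sin_eq_0)
    hence "z = of_int n" by (simp add: field_simps)
    with z show False by auto
  qed
  define g where "g = (\<lambda>w::complex. of_real pi / sin (of_real pi * w))"
  have "g = (\<lambda>w. Gamma w * Gamma (1 - w))"
    by (auto simp: g_def Gamma_reflection_complex)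
  hence "(g has_field_derivative (Gamma z * Gamma (1 - z) * (Digamma z - Digamma (1 - z)))) (at z)"
    using z1 z2 by (auto intro!: derivative_eq_intros simp: algebra_simps)
  moreover have "(g has_field_derivative (- (of_real pi * (cos (of_real pi * z) * of_real pi)) /
      (sin (of_real pi * z))\<^sup>2)) (at z)"
    unfolding g_def using sin_nz by (auto intro!: derivative_eq_intros simp: power2_eq_square)
  ultimately have eq: "g z * (Digamma z - Digamma (1 - z)) =
      - (of_real pi * (cos (of_real pi * z) * of_real pi)) / (sin (of_real pi * z))\<^sup>2"
    unfolding g_def using DERIV_unique Gamma_reflection_complex by metis
  have "Digamma z - Digamma (1 - z) = (sin (of_real pi * z) / of_real pi) * (g z * (Digamma z - Digamma (1 - z)))"
    using sin_nz by (simp add: g_def)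
  also have "\<dots> = - (of_real pi * cos (of_real pi * z) / sin (of_real pi * z))"
    unfolding eq using sin_nz by (simp add: power2_eq_square)
  finally show ?thesis
    by (simp add: cot_def algebra_simps)
qed

theorem pi_cot_partial_fractions:
  fixes z :: complex
  assumes z: "z \<notin> \<int>"
  shows "(\<lambda>n. -2 * z / ((of_nat (Suc n))\<^sup>2 - z\<^sup>2)) sums (of_real pi * cot (of_real pi * z) - 1 / z)"
proof -
  have nz: "z + of_nat n \<noteq> 0" "of_nat n - z \<noteq> 0" for n
    using z by (metis Ints_of_nat add.inverse_inverse minus_add_cancel diff_0 Ints_minus diff_eq_eq
      add.commute)+
  have "(\<lambda>k. inverse (of_nat (Suc k)) - inverse (z + of_nat k)) sums (Digamma z + euler_mascheroni)"
    "(\<lambda>k. inverse (of_nat (Suc k)) - inverse ((1 - z) + of_nat k)) sums (Digamma (1 - z) + euler_mascheroni)"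
    using summable_Digamma[of z] summable_Digamma[of "1 - z"] z nz[of 0] nz[of 1]
    by (auto simp: Digamma_def summable_sums)
  from sums_diff[OF this(2,1)]
  have "(\<lambda>k. inverse (z + of_nat k) - inverse ((1 - z) + of_nat k)) sums (of_real pi * cot (of_real pi * z))"
    by (simp add: pi_cot_eq_Digamma[OF z])
  moreover have "(\<lambda>k. inverse (- z + of_nat k)) \<longlonglongrightarrow> 0"
    by (intro filterlim_compose[OF tendsto_inverse_0]
        tendsto_add_filterlim_at_infinity[OF tendsto_const] tendsto_of_nat)
  hence "(\<lambda>k. inverse (- z + of_nat k) - inverse (- z + of_nat (Suc k))) sums inverse (- z)"
    using telescope_sums' by fastforce
  ultimately have "(\<lambda>k. inverse (z + of_nat k) - inverse (- z + of_nat k)) sums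
      (of_real pi * cot (of_real pi * z) - inverse (- z))"
    by (rule sums_diff[THEN sums_cong[THEN iffD1, rotated]]) (simp add: algebra_simps)
  hence "(\<lambda>k. inverse (z + of_nat (Suc k)) - inverse (- z + of_nat (Suc k))) sums
      (of_real pi * cot (of_real pi * z) - inverse (- z) - (inverse z - inverse (- z)))"
    by (subst sums_Suc_iff) (simp add: add.commute)
  also have "of_real pi * cot (of_real pi * z) - inverse (- z) - (inverse z - inverse (- z)) =
      of_real pi * cot (of_real pi * z) - 1 / z"
    by (simp add: divide_inverse)
  finally have "(\<lambda>k. inverse (z + of_nat (Suc k)) - inverse (- z + of_nat (Suc k))) sums
      (of_real pi * cot (of_real pi * z) - 1 / z)" .
  moreover have "inverse (z + of_nat (Suc k)) - inverse (- z + of_nat (Suc k)) =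
      -2 * z / ((of_nat (Suc k))\<^sup>2 - z\<^sup>2)" for k
    using nz[of "Suc k"] by (simp add: field_simps power2_eq_square)
  ultimately show ?thesis
    by simp
qed

section \<open>Euler's formula for \<open>\<zeta>(2k)\<close>\<close>

lemma sums_swap:
  fixes g :: "nat \<Rightarrow> nat \<Rightarrow> complex"
  assumes rows: "\<And>n. summable (\<lambda>j. norm (g n j))"
    and total: "summable (\<lambda>n. \<Sum>j. norm (g n j))"
    and row_sums: "\<And>n. (\<lambda>j. g n j) sums h n"
    and col_sums: "\<And>j. (\<lambda>n. g n j) sums c j"
    and "h sums S"
  shows "c sums S"
proof -
  have le: "norm (g n j) \<le> (\<Sum>j. norm (g n j))" for n j
    using sum_le_suminf[OF rows, of "{j}" n] by simp
  have cols: "summable (\<lambda>n. norm (g n j))" for j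
    by (rule summable_comparison_test[OF _ total]) (use le in auto)
  have row_norms: "((\<lambda>j. norm (g n j)) has_sum (\<Sum>j. norm (g n j))) UNIV" for n
    by (intro norm_summable_imp_has_sum summable_sums) (use rows in simp_all)
  have "(\<lambda>n. \<Sum>j. norm (g n j)) summable_on UNIV"
    by (rule norm_summable_imp_summable_on) (use total suminf_nonneg[OF rows] in simp)
  hence "(\<lambda>(n, j). norm (g n j)) summable_on UNIV \<times> UNIV"
    using summable_on_SigmaI[where f = "\<lambda>(n, j). norm (g n j)" and A = UNIV and B = "\<lambda>_. UNIV"]
      row_norms by fastforce
  hence "(\<lambda>(n, j). g n j) summable_on UNIV \<times> UNIV"
    by (subst summable_on_iff_abs_summable_on_complex) (simp add: case_prod_unfold)
  then obtain T where T: "((\<lambda>(n, j). g n j) has_sum T) (UNIV \<times> UNIV)"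
    by (auto simp: summable_on_def)
  have "((\<lambda>j. g n j) has_sum h n) UNIV" for n
    by (intro norm_summable_imp_has_sum rows row_sums)
  hence "(h has_sum T) UNIV"
    using has_sum_Sigma'[where f = "\<lambda>(n, j). g n j" and A = UNIV and B = "\<lambda>_. UNIV", OF T] by simp
  hence "T = S"
    using \<open>h sums S\<close> has_sum_imp_sums sums_unique2 by blast
  have "((\<lambda>(j, n). g n j) has_sum T) (UNIV \<times> UNIV)"
    using T by (subst (asm) has_sum_swap) (simp add: case_prod_unfold)
  moreover have "((\<lambda>n. g n j) has_sum c j) UNIV" for j
    by (intro norm_summable_imp_has_sum cols col_sums)
  ultimately have "(c has_sum T) UNIV"
    using has_sum_Sigma'[where f = "\<lambda>(j, n). g n j" and A = UNIV and B = "\<lambda>_. UNIV"] by simp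
  thus ?thesis
    using \<open>T = S\<close> by (auto dest: has_sum_imp_sums)
qed

definition zeta_nat :: "nat \<Rightarrow> real" where
  "zeta_nat m = (\<Sum>n. 1 / real (Suc n) ^ m)"

lemma summable_zeta_nat: "m \<ge> 2 \<Longrightarrow> summable (\<lambda>n. 1 / real (Suc n) ^ m)"
  using inverse_power_summable[of m, where 'a = real] summable_Suc_iff[of "\<lambda>n. 1 / real n ^ m"]
  by (simp add: inverse_eq_divide del: of_nat_Suc)

lemma zeta_nat_sums: "m \<ge> 2 \<Longrightarrow> (\<lambda>n. 1 / real (Suc n) ^ m) sums zeta_nat m"
  unfolding zeta_nat_def by (intro summable_sums summable_zeta_nat)

lemma zeta_nat_pos: "m \<ge> 2 \<Longrightarrow> zeta_nat m > 0"
  unfolding zeta_nat_def by (intro suminf_pos summable_zeta_nat) (simp_all del: of_nat_Suc)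

lemma zeta_nat_le: "m \<ge> 2 \<Longrightarrow> zeta_nat m \<le> zeta_nat 2"
  unfolding zeta_nat_def
  by (intro suminf_le summable_zeta_nat) (auto simp: divide_simps power_increasing simp del: of_nat_Suc)

lemma zeta_of_nat: "m \<ge> 2 \<Longrightarrow> zeta (of_nat m) = of_real (zeta_nat m)"
  using sums_of_real[OF zeta_nat_sums, where 'a = complex]
  by (simp add: zeta_def sums_iff powr_nat' del: of_nat_Suc)

lemma power_Suc_sums:
  fixes w :: "'a :: {banach, real_normed_field}"
  assumes "norm w < 1"
  shows "(\<lambda>j. w ^ Suc j) sums (w / (1 - w))"
  using sums_mult[OF geometric_sums[OF assms], of w] by simp

lemma summable_geometric_row_sums:
  fixes r :: real
  assumes "0 \<le> r" "r < 1"
  shows "summable (\<lambda>n. r / (real (Suc n))\<^sup>2 / (1 - r / (real (Suc n))\<^sup>2))"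
proof (rule summable_comparison_test)
  show "summable (\<lambda>n. r / (1 - r) * (1 / real (Suc n) ^ 2))"
    by (rule summable_mult[OF summable_zeta_nat]) simp
  have bound: "r / a / (1 - r / a) \<le> r / (1 - r) * (1 / a)" if "1 \<le> a" for a :: real
  proof -
    have "r / a / (1 - r / a) = r / (a - r)"
      using that assms by (simp add: field_simps)
    also have "\<dots> \<le> r / ((1 - r) * a)"
    proof (rule divide_left_mono)
      show "(1 - r) * a \<le> a - r"
        using mult_left_mono[OF that assms(1)] by (simp add: algebra_simps)
      show "0 < (a - r) * ((1 - r) * a)"
        using that assms by (intro mult_pos_pos) auto
    qed (use assms in simp)
    finally show ?thesis by simp
  qed
  have nonneg: "r / a / (1 - r / a) \<ge> 0" if "1 \<le> a" for a :: real
    using that assms by (simp add: field_simps)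
  show "\<exists>N. \<forall>n\<ge>N. norm (r / (real (Suc n))\<^sup>2 / (1 - r / (real (Suc n))\<^sup>2)) \<le>
      r / (1 - r) * (1 / real (Suc n) ^ 2)"
  proof (intro exI[of _ 0] allI impI)
    fix n :: nat
    have "1 \<le> (real (Suc n))\<^sup>2" by simp
    from bound[OF this] nonneg[OF this]
    show "norm (r / (real (Suc n))\<^sup>2 / (1 - r / (real (Suc n))\<^sup>2)) \<le> r / (1 - r) * (1 / real (Suc n) ^ 2)"
      by (simp only: real_norm_def abs_of_nonneg)
  qed
qed

text \<open>Expanding each term of the partial fraction series geometrically and summing by columns.\<close>

lemma pi_cot_power_series:
  fixes z :: complex
  assumes "z \<notin> \<int>" "norm z < 1"
  shows "(\<lambda>j. (z\<^sup>2) ^ Suc j * of_real (zeta_nat (2 * Suc j))) sums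
           ((1 - of_real pi * z * cot (of_real pi * z)) / 2)"
proof (rule sums_swap)
  define q where "q n = (norm z)\<^sup>2 / (real (Suc n))\<^sup>2" for n
  define g where "g n j = (z\<^sup>2 / (of_nat (Suc n))\<^sup>2) ^ Suc j" for n j
  have "(norm z)\<^sup>2 < 1"
    using assms(2) by (simp add: power_less_one_iff)
  hence q: "0 \<le> q n" "q n < 1" for n
    by (auto simp: q_def divide_le_eq_1 intro: less_le_trans[OF _ self_le_power] simp del: of_nat_Suc)
  have norm_g: "norm (g n j) = q n ^ Suc j" and "norm (z\<^sup>2 / (of_nat (Suc n))\<^sup>2) = q n" for n j
    by (simp_all add: g_def q_def norm_power norm_divide del: of_nat_Suc power_Suc)
  show "summable (\<lambda>j. norm (g n j))" for n
    unfolding norm_g using power_Suc_sums[of "q n"] q by (auto intro: sums_summable)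
  have "(\<Sum>j. norm (g n j)) = q n / (1 - q n)" for n
    unfolding norm_g using power_Suc_sums[of "q n"] q by (auto simp: sums_iff)
  thus "summable (\<lambda>n. \<Sum>j. norm (g n j))"
    using summable_geometric_row_sums[of "(norm z)\<^sup>2"] \<open>(norm z)\<^sup>2 < 1\<close> by (simp add: q_def)
  have denom: "(of_nat (Suc n))\<^sup>2 - z\<^sup>2 \<noteq> 0" for n
  proof
    assume "(of_nat (Suc n))\<^sup>2 - z\<^sup>2 = 0"
    hence "(norm z)\<^sup>2 = (real (Suc n))\<^sup>2"
      by (metis norm_of_nat norm_power right_minus_eq)
    moreover have "1 \<le> (real (Suc n))\<^sup>2"
      by simp
    ultimately show False
      using \<open>(norm z)\<^sup>2 < 1\<close> by linarith
  qed
  show "(\<lambda>j. g n j) sums (z\<^sup>2 / ((of_nat (Suc n))\<^sup>2 - z\<^sup>2))" for n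
  proof -
    have "(\<lambda>j. g n j) sums ((z\<^sup>2 / (of_nat (Suc n))\<^sup>2) / (1 - z\<^sup>2 / (of_nat (Suc n))\<^sup>2))"
      unfolding g_def using q[of n] \<open>norm (z\<^sup>2 / (of_nat (Suc n))\<^sup>2) = q n\<close> by (intro power_Suc_sums) auto
    also have "(z\<^sup>2 / (of_nat (Suc n))\<^sup>2) / (1 - z\<^sup>2 / (of_nat (Suc n))\<^sup>2) = z\<^sup>2 / ((of_nat (Suc n))\<^sup>2 - z\<^sup>2)"
      using denom[of n] by (simp add: field_simps del: of_nat_Suc)
    finally show ?thesis .
  qed
  have "z \<noteq> 0"
    using assms(1) by auto
  have "(\<lambda>n. (- z / 2) * (-2 * z / ((of_nat (Suc n))\<^sup>2 - z\<^sup>2))) sums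
      ((- z / 2) * (of_real pi * cot (of_real pi * z) - 1 / z))"
    by (rule sums_mult[OF pi_cot_partial_fractions[OF assms(1)]])
  also have "(\<lambda>n. (- z / 2) * (-2 * z / ((of_nat (Suc n))\<^sup>2 - z\<^sup>2))) =
      (\<lambda>n. z\<^sup>2 / ((of_nat (Suc n))\<^sup>2 - z\<^sup>2))"
    by (simp add: power2_eq_square)
  also have "(- z / 2) * (of_real pi * cot (of_real pi * z) - 1 / z) =
      (1 - of_real pi * z * cot (of_real pi * z)) / 2"
    using \<open>z \<noteq> 0\<close> by (simp add: field_simps)
  finally show "(\<lambda>n. z\<^sup>2 / ((of_nat (Suc n))\<^sup>2 - z\<^sup>2)) sums
      ((1 - of_real pi * z * cot (of_real pi * z)) / 2)" .
  show "(\<lambda>n. g n j) sums ((z\<^sup>2) ^ Suc j * of_real (zeta_nat (2 * Suc j)))" for j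
    using sums_mult[OF sums_of_real[OF zeta_nat_sums[of "2 * Suc j"]], of "(z\<^sup>2) ^ Suc j"]
    by (simp add: g_def power_divide power_mult[symmetric] del: of_nat_Suc power_Suc)
qed

text \<open>By \<open>pi_cot_power_series\<close>, \<open>x cot x = 1 - 2 \<Sum>\<^sub>k\<^sub>\<ge>\<^sub>1 \<zeta>(2k) (x / \<pi>)\<^sup>2\<^sup>k\<close> near \<open>0\<close>.\<close>

definition cot_fps :: "complex fps" where
  "cot_fps = Abs_fps (\<lambda>n. if n = 0 then 1 else if even n then - 2 * of_real (zeta_nat n) / of_real pi ^ n else 0)"

lemma fps_conv_radius_cot_fps: "fps_conv_radius cot_fps > 0"
proof -
  have bound: "norm (fps_nth cot_fps n * 1 ^ n) \<le> 2 * zeta_nat 2 * (1 / pi) ^ n" if "n \<ge> 1" for n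
  proof (cases "even n")
    case True
    with that have "n \<ge> 2" by presburger
    hence "2 * \<bar>zeta_nat n\<bar> / pi ^ n \<le> 2 * zeta_nat 2 / pi ^ n"
      using zeta_nat_le zeta_nat_pos by (intro divide_right_mono) (auto simp: less_imp_le)
    thus ?thesis
      using True that by (simp add: cot_fps_def norm_divide norm_mult norm_power power_one_over)
  qed (use that zeta_nat_pos[of 2] in \<open>auto simp: cot_fps_def\<close>)
  have "summable (\<lambda>n. 2 * zeta_nat 2 * (1 / pi) ^ n)"
    by (intro summable_mult summable_geometric) (use pi_gt3 in auto)
  hence "summable (\<lambda>n. fps_nth cot_fps n * 1 ^ n)"
    by (rule summable_comparison_test[rotated]) (use bound in \<open>auto intro!: exI[of _ 1]\<close>)
  hence "fps_conv_radius cot_fps \<ge> norm (1::complex)"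
    unfolding fps_conv_radius_def by (rule conv_radius_geI)
  thus ?thesis
    by (rule less_le_trans[rotated]) simp
qed

lemma cot_fps_sums:
  fixes w :: complex
  assumes "w \<noteq> 0" "norm w < 1"
  shows "(\<lambda>n. fps_nth cot_fps n * w ^ n) sums (w * cot w)"
proof -
  define z where "z = w / of_real pi"
  define f where "f n = fps_nth cot_fps n * w ^ n" for n
  have "norm z < 1"
    using assms(2) pi_gt3 by (simp add: z_def norm_divide field_simps)
  moreover have "z \<notin> \<int>"
  proof
    assume "z \<in> \<int>"
    then obtain m :: int where "z = of_int m"
      by (auto elim: Ints_cases)
    moreover from this have "\<bar>real_of_int m\<bar> < 1"
      using \<open>norm z < 1\<close> by (simp add: norm_of_int)
    hence "m = 0"
      by linarith
    ultimately show False
      using assms(1) by (simp add: z_def)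
  qed
  ultimately have "(\<lambda>j. (z\<^sup>2) ^ Suc j * of_real (zeta_nat (2 * Suc j))) sums ((1 - w * cot w) / 2)"
    using pi_cot_power_series[of z] by (simp add: z_def mult.assoc)
  from sums_mult[OF this, of "-2"]
  have "(\<lambda>j. f (2 * Suc j)) sums (-2 * ((1 - w * cot w) / 2))"
    by (simp add: f_def cot_fps_def z_def power_mult[symmetric] field_simps del: power_Suc)
  hence "(\<lambda>j. f (2 * j)) sums (-2 * ((1 - w * cot w) / 2) + f (2 * 0))"
    by (subst (asm) sums_Suc_iff) simp
  also have "-2 * ((1 - w * cot w) / 2) + f (2 * 0) = w * cot w"
    by (simp add: f_def cot_fps_def field_simps)
  finally have "(\<lambda>j. f (2 * j)) sums (w * cot w)" .
  hence "f sums (w * cot w)"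
    by (subst (asm) sums_mono_reindex) (auto simp: strict_mono_def f_def cot_fps_def elim!: oddE)
  thus ?thesis
    unfolding f_def .
qed

lemma sin_nonzero_if_norm_less_1:
  fixes w :: complex
  assumes "w \<noteq> 0" "norm w < 1"
  shows "sin w \<noteq> 0"
proof
  assume "sin w = 0"
  then obtain n :: int where n: "w = of_real (of_int n * pi)"
    by (auto simp: sin_eq_0)
  with assms(2) have "\<bar>of_int n * pi\<bar> < 1"
    by (simp only: norm_of_real)
  hence "\<bar>of_int n\<bar> * pi < 1"
    by (simp add: abs_mult)
  hence "\<bar>of_int n :: real\<bar> < 1"
    using pi_gt3 by (smt (verit) mult_le_cancel_right1)
  with n assms(1) show False
    by simp
qed

lemma cot_fps_mult_sin: "cot_fps * fps_sin 1 = fps_X * fps_cos 1"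
proof (rule eval_fps_eqD)
  show "fps_conv_radius (cot_fps * fps_sin 1) > 0"
    using fps_conv_radius_cot_fps fps_conv_radius_mult[of cot_fps "fps_sin 1"] by (auto intro: less_le_trans)
  show "fps_conv_radius (fps_X * fps_cos (1::complex)) > 0"
    using fps_conv_radius_mult[of fps_X "fps_cos (1::complex)"] by (auto intro: less_le_trans)
  have "eventually (\<lambda>w::complex. w \<in> eball 0 (fps_conv_radius cot_fps)) (nhds 0)"
    using fps_conv_radius_cot_fps by (intro eventually_nhds_in_open) (auto simp: zero_ereal_def)
  moreover have "eventually (\<lambda>w::complex. w \<in> ball 0 1) (nhds 0)"
    by (intro eventually_nhds_in_open) auto
  ultimately show "eventually (\<lambda>w. eval_fps (cot_fps * fps_sin 1) w = eval_fps (fps_X * fps_cos 1) w) (nhds 0)"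
  proof eventually_elim
    case (elim w)
    hence "norm w < 1" "ereal (norm w) < fps_conv_radius cot_fps"
      by simp_all
    have "eval_fps cot_fps w * sin w = w * cos w"
    proof (cases "w = 0")
      case False
      have "eval_fps cot_fps w = w * cot w"
        using sums_eval_fps[OF \<open>ereal (norm w) < _\<close>] cot_fps_sums[OF False \<open>norm w < 1\<close>] sums_unique2
        by blast
      thus ?thesis
        using sin_nonzero_if_norm_less_1[OF False \<open>norm w < 1\<close>] by (simp add: cot_def)
    qed simp
    thus ?case
      using \<open>ereal (norm w) < _\<close> by (simp add: eval_fps_mult)
  qed
qed

lemma cot_fps_eq_bernoulli_fps: "cot_fps = bernoulli_fps (2 * \<i>) + fps_const \<i> * fps_X"
proof -
  have "fps_X * (cot_fps * sin_div_X_fps) = fps_X * ((bernoulli_fps (2 * \<i>) + fps_const \<i> * fps_X) * sin_div_X_fps)"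
    using cot_fps_mult_sin unfolding bernoulli_fps_cot fps_X_mult_sin_div_X_fps[symmetric]
    by (simp add: ac_simps)
  thus ?thesis
    using sin_div_X_fps_nonzero by simp
qed

theorem zeta_nat_even:
  assumes "k \<ge> 1"
  shows "zeta_nat (2 * k) = \<bar>bernoulli (2 * k)\<bar> * (2 * pi) ^ (2 * k) / (2 * fact (2 * k))"
proof -
  have "fps_nth cot_fps (2 * k) = fps_nth (bernoulli_fps (2 * \<i>) + fps_const \<i> * fps_X) (2 * k)"
    by (simp add: cot_fps_eq_bernoulli_fps)
  moreover have "(2 * \<i>) ^ (2 * k) = (of_real ((-4) ^ k) :: complex)"
    by (simp add: power_mult power_mult_distrib)
  ultimately have "complex_of_real (- 2 * zeta_nat (2 * k) / pi ^ (2 * k)) =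
      complex_of_real (bernoulli (2 * k) * (-4) ^ k / fact (2 * k))"
    using assms by (simp add: cot_fps_def bernoulli_fps_def)
  hence "zeta_nat (2 * k) = - bernoulli (2 * k) * (-4) ^ k * pi ^ (2 * k) / (2 * fact (2 * k))"
    unfolding of_real_eq_iff by (simp add: field_simps)
  moreover have "(2 * pi) ^ (2 * k) = 4 ^ k * pi ^ (2 * k)"
    by (simp add: power_mult power_mult_distrib)
  ultimately have "\<bar>zeta_nat (2 * k)\<bar> = \<bar>bernoulli (2 * k)\<bar> * (2 * pi) ^ (2 * k) / (2 * fact (2 * k))"
    by (simp add: abs_mult power_abs)
  thus ?thesis
    using zeta_nat_pos[of "2 * k"] assms by simp
qed

lemma zeta_nat_ratio:
  assumes "k \<ge> 1"
  shows "zeta_nat (4 * k) / zeta_nat (2 * k) =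
    ((2 * pi) ^ k)\<^sup>2 * (\<bar>bernoulli (4 * k)\<bar> * fact (2 * k) / (\<bar>bernoulli (2 * k)\<bar> * fact (4 * k)))"
proof -
  define P where "P = (2 * pi) ^ (2 * k)"
  define Q where "Q = ((2 * pi) ^ k)\<^sup>2"
  have "4 * k = k * 2 + 2 * k"
    by simp
  hence "(2 * pi) ^ (4 * k) = Q * P"
    unfolding P_def Q_def by (simp only: power_add power_mult)
  hence zeta_4k: "zeta_nat (4 * k) = \<bar>bernoulli (4 * k)\<bar> * (Q * P) / (2 * fact (4 * k))"
    using zeta_nat_even[of "2 * k"] assms by (simp add: mult.assoc)
  have zeta_2k: "zeta_nat (2 * k) = \<bar>bernoulli (2 * k)\<bar> * P / (2 * fact (2 * k))"
    using zeta_nat_even[of k] assms by (simp add: P_def)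
  have "\<bar>bernoulli (2 * k)\<bar> \<noteq> 0" "P \<noteq> 0"
    using zeta_nat_pos[of "2 * k"] zeta_nat_even[of k] assms by (auto simp: P_def)
  thus ?thesis
    unfolding Q_def[symmetric] zeta_4k zeta_2k by (simp add: field_simps)
qed

theorem norm_zeta_squared_eq_prodinf:
  fixes \<sigma> t :: real
  assumes "\<sigma> > 1"
  shows "convergent_prod (\<lambda>n. inverse (cosh_factor \<sigma> t n))"
    and "complex_of_real ((cmod (zeta (Complex \<sigma> t)))\<^sup>2) =
      zeta (of_real (4 * \<sigma>)) / zeta (of_real (2 * \<sigma>)) * complex_of_real (\<Prod>n. inverse (cosh_factor \<sigma> t n))"
proof -
  obtain L where L: "(\<lambda>n. inverse (cosh_factor \<sigma> t n)) has_prod L"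
    "complex_of_real L = zeta (of_real (2 * \<sigma>)) * of_real ((cmod (zeta (Complex \<sigma> t)))\<^sup>2) / zeta (of_real (4 * \<sigma>))"
    using has_prod_inverse_cosh_factor[OF assms] .
  show "convergent_prod (\<lambda>n. inverse (cosh_factor \<sigma> t n))"
    using L(1) by (simp add: has_prod_iff)
  have "zeta (of_real (2 * \<sigma>)) \<noteq> 0" "zeta (of_real (4 * \<sigma>)) \<noteq> 0"
    using assms by (simp_all add: zeta_nonzero)
  with L show "complex_of_real ((cmod (zeta (Complex \<sigma> t)))\<^sup>2) =
      zeta (of_real (4 * \<sigma>)) / zeta (of_real (2 * \<sigma>)) * complex_of_real (\<Prod>n. inverse (cosh_factor \<sigma> t n))"
    by (simp add: has_prod_iff field_simps)
qed

theorem norm_zeta_nat_eq_prodinf: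
  fixes k :: nat and t :: real
  assumes "k \<ge> 2"
  shows "convergent_prod (\<lambda>n. cosh_factor (real k) t n powr (-1/2))"
    and "cmod (zeta (Complex (real k) t)) =
      (2 * pi) ^ k * sqrt (\<bar>bernoulli (4 * k)\<bar> * fact (2 * k) / (\<bar>bernoulli (2 * k)\<bar> * fact (4 * k))) *
      (\<Prod>n. cosh_factor (real k) t n powr (-1/2))"
proof -
  define R where "R = \<bar>bernoulli (4 * k)\<bar> * fact (2 * k) / (\<bar>bernoulli (2 * k)\<bar> * fact (4 * k))"
  have "real k > 1"
    using assms by simp
  then obtain L where L: "(\<lambda>n. inverse (cosh_factor (real k) t n)) has_prod L"
    "complex_of_real L = zeta (of_real (2 * real k)) * of_real ((cmod (zeta (Complex (real k) t)))\<^sup>2) /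
      zeta (of_real (4 * real k))"
    by (rule has_prod_inverse_cosh_factor)
  have pos: "inverse (cosh_factor (real k) t n) > 0" for n
    using \<open>real k > 1\<close> cosh_factor_pos by simp
  hence "L > 0"
    using has_prod_pos[OF L(1)] by blast
  have "(\<lambda>n. inverse (cosh_factor (real k) t n) powr (1/2)) has_prod L powr (1/2)"
    using pos L(1) by (rule has_prod_powr)
  moreover have "inverse (cosh_factor (real k) t n) powr (1/2) = cosh_factor (real k) t n powr (-1/2)" for n
    by (simp add: inverse_powr powr_minus)
  ultimately have G: "(\<lambda>n. cosh_factor (real k) t n powr (-1/2)) has_prod sqrt L"
    using \<open>L > 0\<close> by (simp add: powr_half_sqrt)
  thus "convergent_prod (\<lambda>n. cosh_factor (real k) t n powr (-1/2))"
    by (simp add: has_prod_iff)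
  have "zeta (of_real (2 * real k)) = of_real (zeta_nat (2 * k))" "zeta (of_real (4 * real k)) = of_real (zeta_nat (4 * k))"
    using assms zeta_of_nat[of "2 * k"] zeta_of_nat[of "4 * k"] by simp_all
  with L(2) have "L = zeta_nat (2 * k) * (cmod (zeta (Complex (real k) t)))\<^sup>2 / zeta_nat (4 * k)"
    by (metis of_real_eq_iff of_real_mult of_real_divide)
  hence "(cmod (zeta (Complex (real k) t)))\<^sup>2 = zeta_nat (4 * k) / zeta_nat (2 * k) * L"
    using zeta_nat_pos[of "2 * k"] zeta_nat_pos[of "4 * k"] assms by (simp add: field_simps)
  also have "\<dots> = ((2 * pi) ^ k)\<^sup>2 * R * L"
    using assms by (simp add: zeta_nat_ratio R_def)
  finally have "cmod (zeta (Complex (real k) t)) = sqrt (((2 * pi) ^ k)\<^sup>2 * R * L)"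
    by (metis norm_ge_zero real_sqrt_abs abs_of_nonneg)
  also have "\<dots> = (2 * pi) ^ k * sqrt R * sqrt L"
    by (simp add: real_sqrt_mult)
  finally show "cmod (zeta (Complex (real k) t)) = (2 * pi) ^ k * sqrt R * (\<Prod>n. cosh_factor (real k) t n powr (-1/2))"
    using G by (simp add: has_prod_iff)
qed

theorem mainTheorem6:
  shows "(\<forall>(\<sigma>::real) (t::real). \<sigma> > 1 \<longrightarrow>
            convergent_prod (\<lambda>n. inverse (1 - cos (t * ln (real (nth_prime n)))
                                          / cosh (\<sigma> * ln (real (nth_prime n))))) \<and>
            complex_of_real ((cmod (zeta (Complex \<sigma> t)))\<^sup>2) =
              zeta (complex_of_real (4 * \<sigma>)) / zeta (complex_of_real (2 * \<sigma>)) *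
              complex_of_real (\<Prod>n. inverse (1 - cos (t * ln (real (nth_prime n)))
                                          / cosh (\<sigma> * ln (real (nth_prime n))))))
       \<and> (\<forall>(k::nat) (t::real). k \<ge> 2 \<longrightarrow>
            convergent_prod (\<lambda>n. (1 - cos (t * ln (real (nth_prime n)))
                                          / cosh (real k * ln (real (nth_prime n)))) powr (-1/2)) \<and>
            cmod (zeta (Complex (real k) t)) =
              (2 * pi) ^ k * sqrt (\<bar>bernoulli (4 * k)\<bar> * fact (2 * k)
                                   / (\<bar>bernoulli (2 * k)\<bar> * fact (4 * k))) *
              (\<Prod>n. (1 - cos (t * ln (real (nth_prime n)))
                          / cosh (real k * ln (real (nth_prime n)))) powr (-1/2)))"
  using norm_zeta_squared_eq_prodinf norm_zeta_nat_eq_prodinf unfolding cosh_factor_def by blast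

end
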